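(* Let $(\mathcal E,d)$ be a compact metric space, $k>1$, and $f_1,\dots,f_k$ homeomorphisms of $\mathcal E$ such that there are compact subsets $A_1,B_1,\dots,A_k,B_k$ of $\mathcal E$, pairwise disjoint, with $f_i(\mathcal E\setminus A_i)\subset B_i$ for each $i$, and such that the restrictions of $f_i$ to $\mathcal E\setminus A_i$ and of $f_i^{-1}$ to $\mathcal E\setminus B_i$ are contractions for $d$. For $g\in\{f_i,f_i^{-1}\}$ set $C(g)=B_i$, $C'(g)=A_i$ if $g=f_i$, and $C(g)=A_i$, $C'(g)=B_i$ if $g=f_i^{-1}$. Then for every $\varepsilon>0$ there is $\ell\in\mathbb N$ such that for every reduced word $g_\ell\circ\cdots\circ g_1$ with letters $g_j\in\{f_i,f_i^{-1}:1\le i\le k\}$ one has $\mathrm{diam}\big(g_\ell\circ\cdots\circ g_1(\mathcal E\setminus C'(g_1))\big)<\varepsilon$.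
   Context: A word $g_\ell\circ\cdots\circ g_1$ is reduced if no letter is immediately followed by its inverse ($g_{j+1}\neq g_j^{-1}$). A map is a contraction for $d$ on a set if it does not increase and strictly decreases distances there: $d(f(x),f(y))<d(x,y)$ for distinct $x,y$ in that set. *)

theory Defs
  imports "HOL-Analysis.Analysis"
begin

definition contraction_on :: "'a::metric_space set \<Rightarrow> ('a \<Rightarrow> 'a) \<Rightarrow> bool" where
  "contraction_on S h \<longleftrightarrow>
     (\<forall>x\<in>S. \<forall>y\<in>S. dist (h x) (h y) \<le> dist x y) \<and>
     (\<forall>x\<in>S. \<forall>y\<in>S. x \<noteq> y \<longrightarrow> dist (h x) (h y) < dist x y)"

text \<open>Letters: (i, True) stands for f_i, (i, False) for f_i^{-1}.\<close>
type_synonym letter = "nat \<times> bool"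

definition letter_map :: "(nat \<Rightarrow> 'a \<Rightarrow> 'a) \<Rightarrow> (nat \<Rightarrow> 'a \<Rightarrow> 'a) \<Rightarrow> letter \<Rightarrow> 'a \<Rightarrow> 'a" where
  "letter_map f finv l = (if snd l then f (fst l) else finv (fst l))"

definition letter_inv :: "letter \<Rightarrow> letter" where
  "letter_inv l = (fst l, \<not> snd l)"

definition Cset :: "(nat \<Rightarrow> 'a set) \<Rightarrow> (nat \<Rightarrow> 'a set) \<Rightarrow> letter \<Rightarrow> 'a set" where
  "Cset A B l = (if snd l then B (fst l) else A (fst l))"

definition C'set :: "(nat \<Rightarrow> 'a set) \<Rightarrow> (nat \<Rightarrow> 'a set) \<Rightarrow> letter \<Rightarrow> 'a set" where
  "C'set A B l = (if snd l then A (fst l) else B (fst l))"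

text \<open>The word [g_1, ..., g_l] is evaluated as g_l \<circ> ... \<circ> g_1.\<close>
fun word_map :: "(nat \<Rightarrow> 'a \<Rightarrow> 'a) \<Rightarrow> (nat \<Rightarrow> 'a \<Rightarrow> 'a) \<Rightarrow> letter list \<Rightarrow> 'a \<Rightarrow> 'a" where
  "word_map f finv [] = id"
| "word_map f finv (l # ls) = word_map f finv ls \<circ> letter_map f finv l"

definition reduced_word :: "letter list \<Rightarrow> bool" where
  "reduced_word w \<longleftrightarrow> (\<forall>j. Suc j < length w \<longrightarrow> w ! Suc j \<noteq> letter_inv (w ! j))"

end

theory Submission
  imports Defs
begin

text \<open>For letters \<open>h, g\<close> with \<open>g \<noteq> h\<^sup>-\<^sup>1\<close> the compact set \<open>C(h)\<close> lies in the domain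
  \<open>\<E> - C'(g)\<close> on which \<open>g\<close> strictly contracts; by compactness of the pairs at distance \<open>\<ge> t\<close>,
  \<open>g\<close> shrinks all such distances by a uniform \<open>\<delta> > 0\<close>, and there are finitely many pairs \<open>(h, g)\<close>.
  Along a reduced word every letter maps \<open>C\<close> of its predecessor into its own \<open>C\<close>, and distances never
  grow, so two image points that still end up at distance \<open>\<ge> t\<close> lost \<open>\<delta>\<close> at every step. Since \<open>\<E>\<close>
  is bounded, after more than \<open>diam \<E> / \<delta>\<close> steps all distances are below \<open>t\<close>.\<close>

lemma compact_strict_contraction_uniform:
  fixes g :: "'a::metric_space \<Rightarrow> 'b::metric_space"
  assumes K: "compact K" and cont: "continuous_on K g"
    and strict: "\<And>x y. x \<in> K \<Longrightarrow> y \<in> K \<Longrightarrow> x \<noteq> y \<Longrightarrow> dist (g x) (g y) < dist x y"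
    and t: "t > 0"
  shows "\<exists>\<delta>>0. \<forall>x\<in>K. \<forall>y\<in>K. t \<le> dist x y \<longrightarrow> dist (g x) (g y) \<le> dist x y - \<delta>"
proof -
  define Q where "Q = (K \<times> K) \<inter> {p. t \<le> dist (fst p) (snd p)}"
  define gap where "gap p = dist (fst p) (snd p) - dist (g (fst p)) (g (snd p))" for p
  have "closed {p::'a \<times> 'a. t \<le> dist (fst p) (snd p)}"
    by (intro closed_Collect_le continuous_intros)
  then have "compact Q"
    unfolding Q_def by (intro compact_Int_closed compact_Times K)
  show ?thesis
  proof (cases "Q = {}")
    case True
    then show ?thesis by (intro exI[of _ 1]) (auto simp: Q_def)
  next
    case False
    have g_fst: "continuous_on Q (\<lambda>p. g (fst p))"
      by (rule continuous_on_compose2[OF cont continuous_on_fst]) (auto simp: Q_def)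
    have g_snd: "continuous_on Q (\<lambda>p. g (snd p))"
      by (rule continuous_on_compose2[OF cont continuous_on_snd]) (auto simp: Q_def)
    have "continuous_on Q (\<lambda>p. gap p)"
      unfolding gap_def by (intro continuous_intros g_fst g_snd)
    then obtain p0 where p0: "p0 \<in> Q" "\<And>p. p \<in> Q \<Longrightarrow> gap p0 \<le> gap p"
      using continuous_attains_inf[OF \<open>compact Q\<close> False] by blast
    have "fst p0 \<noteq> snd p0"
      using p0(1) t by (auto simp: Q_def)
    then have "gap p0 > 0"
      using p0(1) strict by (auto simp: Q_def gap_def)
    moreover have "dist (g x) (g y) \<le> dist x y - gap p0"
      if "x \<in> K" "y \<in> K" "t \<le> dist x y" for x y
      using p0(2)[of "(x, y)"] that by (simp add: Q_def gap_def)
    ultimately show ?thesis by blast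
  qed
qed

lemma finite_ex_pos_uniform:
  assumes "finite S" "\<And>s. s \<in> S \<Longrightarrow> \<exists>\<delta>::real>0. P s \<delta>"
    and mono: "\<And>s \<delta> \<delta>'. P s \<delta> \<Longrightarrow> 0 < \<delta>' \<Longrightarrow> \<delta>' \<le> \<delta> \<Longrightarrow> P s \<delta>'"
  shows "\<exists>\<delta>>0. \<forall>s\<in>S. P s \<delta>"
  using assms(1,2)
proof (induction S rule: finite_induct)
  case empty
  then show ?case by (auto intro: exI[of _ 1])
next
  case (insert x F)
  then obtain d1 d2 where "d1 > 0" "\<forall>s\<in>F. P s d1" "d2 > 0" "P x d2"
    by (metis insertCI)
  then show ?case
    by (intro exI[of _ "min d1 d2"]) (auto intro: mono)
qed

lemma diameter_le_dist_bound:
  fixes S :: "'a::metric_space set"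
  assumes "0 \<le> d" "\<And>x y. x \<in> S \<Longrightarrow> y \<in> S \<Longrightarrow> dist x y \<le> d"
  shows "diameter S \<le> d"
  using assms by (auto simp: diameter_def intro: cSUP_least)

lemma reduced_word_Cons_Cons [simp]:
  "reduced_word (h # g # ws) \<longleftrightarrow> g \<noteq> letter_inv h \<and> reduced_word (g # ws)"
  unfolding reduced_word_def by (auto simp: less_Suc_eq_0_disj)

text \<open>The hypothesis \<open>t \<le> dist\<close> is only needed at the end of the word: by non-expansion it
  then holds at every intermediate step as well.\<close>
lemma word_map_dist_decrease:
  fixes f finv :: "nat \<Rightarrow> 'a::metric_space \<Rightarrow> 'a" and C :: "letter \<Rightarrow> 'a set"
  defines "G \<equiv> letter_map f finv"
  assumes maps_into: "\<And>h g. h \<in> L \<Longrightarrow> g \<in> L \<Longrightarrow> g \<noteq> letter_inv h \<Longrightarrow> G g ` C h \<subseteq> C g"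
    and non_exp: "\<And>h g x y. h \<in> L \<Longrightarrow> g \<in> L \<Longrightarrow> g \<noteq> letter_inv h \<Longrightarrow> x \<in> C h \<Longrightarrow> y \<in> C h \<Longrightarrow>
        dist (G g x) (G g y) \<le> dist x y"
    and decrease: "\<And>h g x y. h \<in> L \<Longrightarrow> g \<in> L \<Longrightarrow> g \<noteq> letter_inv h \<Longrightarrow> x \<in> C h \<Longrightarrow> y \<in> C h \<Longrightarrow>
        t \<le> dist x y \<Longrightarrow> dist (G g x) (G g y) \<le> dist x y - \<delta>"
    and "\<delta> \<ge> 0"
  shows "set (h # ws) \<subseteq> L \<Longrightarrow> reduced_word (h # ws) \<Longrightarrow> x \<in> C h \<Longrightarrow> y \<in> C h \<Longrightarrow>
      t \<le> dist (word_map f finv ws x) (word_map f finv ws y) \<Longrightarrow>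
      dist (word_map f finv ws x) (word_map f finv ws y) \<le> dist x y - real (length ws) * \<delta>"
proof (induction ws arbitrary: h x y)
  case Nil
  then show ?case by simp
next
  case (Cons g ws)
  let ?W = "word_map f finv ws"
  have hg: "h \<in> L" "g \<in> L" "g \<noteq> letter_inv h" and red: "reduced_word (g # ws)"
    using Cons.prems(1,2) by auto
  have "G g x \<in> C g" "G g y \<in> C g"
    using maps_into[OF hg] Cons.prems(3,4) by auto
  then have IH: "dist (?W (G g x)) (?W (G g y)) \<le> dist (G g x) (G g y) - real (length ws) * \<delta>"
    using Cons.IH[of g] Cons.prems(1,5) red by (simp add: G_def)
  have "dist (G g x) (G g y) \<le> dist x y"
    using non_exp[OF hg Cons.prems(3,4)] .
  moreover have "t \<le> dist (?W (G g x)) (?W (G g y))"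
    using Cons.prems(5) by (simp add: G_def)
  moreover have "real (length ws) * \<delta> \<ge> 0"
    using \<open>\<delta> \<ge> 0\<close> by simp
  ultimately have "t \<le> dist x y"
    using IH by linarith
  then have "dist (G g x) (G g y) \<le> dist x y - \<delta>"
    using decrease[OF hg Cons.prems(3,4)] by blast
  with IH show ?case
    by (simp add: G_def algebra_simps)
qed

locale contracting_ping_pong =
  fixes E :: "'a::metric_space set" and k :: nat
    and f finv :: "nat \<Rightarrow> 'a \<Rightarrow> 'a" and A B :: "nat \<Rightarrow> 'a set"
  assumes compact_E: "compact E"
    and homeo: "\<And>i. i \<in> {1..k} \<Longrightarrow> homeomorphism E E (f i) (finv i)"
    and compact_A: "\<And>i. i \<in> {1..k} \<Longrightarrow> compact (A i)" and A_subset: "\<And>i. i \<in> {1..k} \<Longrightarrow> A i \<subseteq> E"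
    and compact_B: "\<And>i. i \<in> {1..k} \<Longrightarrow> compact (B i)" and B_subset: "\<And>i. i \<in> {1..k} \<Longrightarrow> B i \<subseteq> E"
    and disjAB: "\<And>i j. i \<in> {1..k} \<Longrightarrow> j \<in> {1..k} \<Longrightarrow> A i \<inter> B j = {}"
    and disjA: "\<And>i j. i \<in> {1..k} \<Longrightarrow> j \<in> {1..k} \<Longrightarrow> i \<noteq> j \<Longrightarrow> A i \<inter> A j = {}"
    and disjB: "\<And>i j. i \<in> {1..k} \<Longrightarrow> j \<in> {1..k} \<Longrightarrow> i \<noteq> j \<Longrightarrow> B i \<inter> B j = {}"
    and pingpong: "\<And>i. i \<in> {1..k} \<Longrightarrow> f i ` (E - A i) \<subseteq> B i"
    and contraction_f: "\<And>i. i \<in> {1..k} \<Longrightarrow> contraction_on (E - A i) (f i)"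
    and contraction_finv: "\<And>i. i \<in> {1..k} \<Longrightarrow> contraction_on (E - B i) (finv i)"
begin

abbreviation letters :: "letter set" where
  "letters \<equiv> {1..k} \<times> UNIV"

abbreviation G :: "letter \<Rightarrow> 'a \<Rightarrow> 'a" where
  "G \<equiv> letter_map f finv"

abbreviation C :: "letter \<Rightarrow> 'a set" where
  "C \<equiv> Cset A B"

abbreviation C' :: "letter \<Rightarrow> 'a set" where
  "C' \<equiv> C'set A B"

lemma finv_pingpong:
  assumes i: "i \<in> {1..k}"
  shows "finv i ` (E - B i) \<subseteq> A i"
proof
  fix z assume "z \<in> finv i ` (E - B i)"
  then obtain x where x: "x \<in> E" "x \<notin> B i" "z = finv i x" by auto
  have "z \<in> E"
    using x(1,3) homeomorphism_image2[OF homeo[OF i]] by blast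
  moreover have "f i z = x"
    using x(1,3) homeomorphism_apply2[OF homeo[OF i]] by simp
  ultimately show "z \<in> A i"
    using pingpong[OF i] x(2) by blast
qed

lemma letter_map_pingpong: "g \<in> letters \<Longrightarrow> G g ` (E - C' g) \<subseteq> C g"
  using pingpong finv_pingpong
  by (cases g) (auto simp: letter_map_def Cset_def C'set_def)

lemma contraction_on_letter_map: "g \<in> letters \<Longrightarrow> contraction_on (E - C' g) (G g)"
  using contraction_f contraction_finv
  by (cases g) (auto simp: letter_map_def C'set_def)

lemma continuous_on_letter_map: "g \<in> letters \<Longrightarrow> continuous_on E (G g)"
  using homeomorphism_cont1[OF homeo] homeomorphism_cont2[OF homeo]
  by (cases g) (auto simp: letter_map_def)

lemma compact_Cset: "g \<in> letters \<Longrightarrow> compact (C g)"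
  using compact_A compact_B by (cases g) (auto simp: Cset_def)

lemma Cset_subset: "g \<in> letters \<Longrightarrow> C g \<subseteq> E"
  using A_subset B_subset by (cases g) (auto simp: Cset_def)

lemma Cset_subset_Diff_C'set:
  assumes "h \<in> letters" "g \<in> letters" "g \<noteq> letter_inv h"
  shows "C h \<subseteq> E - C' g"
proof -
  obtain i b j c where hg: "h = (i, b)" "g = (j, c)" "i \<in> {1..k}" "j \<in> {1..k}"
    using assms(1,2) by auto
  show ?thesis
    using assms(3) Cset_subset[OF assms(1)] disjAB[OF hg(3,4)] disjAB[OF hg(4,3)]
      disjA[OF hg(3,4)] disjB[OF hg(3,4)]
    unfolding hg Cset_def C'set_def letter_inv_def by (cases b; cases c) auto
qed

lemma letter_map_Cset_subset:
  assumes "h \<in> letters" "g \<in> letters" "g \<noteq> letter_inv h"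
  shows "G g ` C h \<subseteq> C g"
  using image_mono[OF Cset_subset_Diff_C'set[OF assms]] letter_map_pingpong[OF assms(2)] by (rule order_trans)

lemma dist_letter_map_le:
  assumes "h \<in> letters" "g \<in> letters" "g \<noteq> letter_inv h" "x \<in> C h" "y \<in> C h"
  shows "dist (G g x) (G g y) \<le> dist x y"
proof -
  have "x \<in> E - C' g" "y \<in> E - C' g"
    using Cset_subset_Diff_C'set[OF assms(1-3)] assms(4,5) by auto
  then show ?thesis
    using contraction_on_letter_map[OF assms(2)] unfolding contraction_on_def by simp
qed

lemma uniform_decrease:
  assumes "t > 0"
  shows "\<exists>\<delta>>0. \<forall>h\<in>letters. \<forall>g\<in>letters. g \<noteq> letter_inv h \<longrightarrow>
    (\<forall>x\<in>C h. \<forall>y\<in>C h. t \<le> dist x y \<longrightarrow> dist (G g x) (G g y) \<le> dist x y - \<delta>)"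
proof -
  define S where "S = {p \<in> letters \<times> letters. snd p \<noteq> letter_inv (fst p)}"
  define P where "P p \<delta> \<longleftrightarrow> (\<forall>x\<in>C (fst p). \<forall>y\<in>C (fst p). t \<le> dist x y \<longrightarrow>
    dist (G (snd p) x) (G (snd p) y) \<le> dist x y - \<delta>)" for p \<delta>
  have "finite S"
    unfolding S_def by simp
  moreover have "\<exists>\<delta>>0. P p \<delta>" if "p \<in> S" for p
  proof -
    have h: "fst p \<in> letters" and g: "snd p \<in> letters" and hg: "snd p \<noteq> letter_inv (fst p)"
      using that by (auto simp: S_def mem_Times_iff)
    have sub: "C (fst p) \<subseteq> E - C' (snd p)"
      using Cset_subset_Diff_C'set[OF h g hg] .
    have "continuous_on (C (fst p)) (G (snd p))"
      using continuous_on_subset[OF continuous_on_letter_map[OF g]] sub by blast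
    moreover have "dist (G (snd p) x) (G (snd p) y) < dist x y"
      if "x \<in> C (fst p)" "y \<in> C (fst p)" "x \<noteq> y" for x y
      using contraction_on_letter_map[OF g] sub that unfolding contraction_on_def by blast
    ultimately show ?thesis
      unfolding P_def by (rule compact_strict_contraction_uniform[OF compact_Cset[OF h] _ _ assms])
  qed
  moreover have "P p \<delta>'" if "P p \<delta>" "\<delta>' \<le> \<delta>" for p \<delta> \<delta>'
    using that unfolding P_def by (meson diff_left_mono order_trans)
  ultimately obtain \<delta> where "\<delta> > 0" and \<delta>: "\<And>p. p \<in> S \<Longrightarrow> P p \<delta>"
    using finite_ex_pos_uniform[of S P] by blast
  have "P (h, g) \<delta>" if "h \<in> letters" "g \<in> letters" "g \<noteq> letter_inv h" for h g
    using that by (intro \<delta>) (simp add: S_def)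
  with \<open>\<delta> > 0\<close> show ?thesis
    unfolding P_def by auto
qed

lemma reduced_word_image_close:
  assumes "t > 0"
  shows "\<exists>l\<ge>1. \<forall>w. length w = l \<longrightarrow> set w \<subseteq> letters \<longrightarrow> reduced_word w \<longrightarrow>
    (\<forall>u\<in>word_map f finv w ` (E - C' (hd w)). \<forall>v\<in>word_map f finv w ` (E - C' (hd w)). dist u v < t)"
proof -
  obtain \<delta> where "\<delta> > 0" and decrease: "\<And>h g x y. h \<in> letters \<Longrightarrow> g \<in> letters \<Longrightarrow>
    g \<noteq> letter_inv h \<Longrightarrow> x \<in> C h \<Longrightarrow> y \<in> C h \<Longrightarrow> t \<le> dist x y \<Longrightarrow>
    dist (G g x) (G g y) \<le> dist x y - \<delta>"
    using uniform_decrease[OF assms] by blast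
  obtain D where D: "\<forall>x\<in>E. \<forall>y\<in>E. dist x y \<le> D"
    using compact_imp_bounded[OF compact_E] bounded_two_points by blast
  obtain m where m: "D < real m * \<delta>"
    using ex_less_of_nat_mult[OF \<open>\<delta> > 0\<close>] by blast
  have close: "dist u v < t"
    if w: "length ws = m" "set (g1 # ws) \<subseteq> letters" "reduced_word (g1 # ws)"
      and uv: "u \<in> word_map f finv (g1 # ws) ` (E - C' g1)" "v \<in> word_map f finv (g1 # ws) ` (E - C' g1)"
    for g1 ws u v
  proof (rule ccontr)
    assume far: "\<not> dist u v < t"
    obtain x0 y0 where x0: "x0 \<in> E - C' g1" "u = word_map f finv ws (G g1 x0)"
      and y0: "y0 \<in> E - C' g1" "v = word_map f finv ws (G g1 y0)"
      using uv by auto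
    define x y where "x = G g1 x0" and "y = G g1 y0"
    have "g1 \<in> letters"
      using w(2) by simp
    then have xy: "x \<in> C g1" "y \<in> C g1" "u = word_map f finv ws x" "v = word_map f finv ws y"
      using letter_map_pingpong x0 y0 unfolding x_def y_def by blast+
    have "dist u v \<le> dist x y - real m * \<delta>"
      using word_map_dist_decrease[OF letter_map_Cset_subset dist_letter_map_le decrease
          less_imp_le[OF \<open>\<delta> > 0\<close>] w(2,3) xy(1,2)] far
      unfolding xy(3,4) w(1) by simp
    moreover have "dist x y \<le> D"
      using D Cset_subset[of g1] w(2) xy(1,2) by auto
    ultimately show False
      using m zero_le_dist[of u v] by linarith
  qed
  show ?thesis
  proof (intro exI[of _ "Suc m"] conjI allI impI ballI)
    fix w u v
    assume w: "length w = Suc m" "set w \<subseteq> letters" "reduced_word w"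
      and uv: "u \<in> word_map f finv w ` (E - C' (hd w))" "v \<in> word_map f finv w ` (E - C' (hd w))"
    obtain g1 ws where "w = g1 # ws"
      using w(1) by (cases w) auto
    with w uv show "dist u v < t"
      using close[of ws g1 u v] by simp
  qed simp
qed

end

theorem lemma6p3:
  fixes E :: "'a::metric_space set"
    and k :: nat
    and f finv :: "nat \<Rightarrow> 'a \<Rightarrow> 'a"
    and A B :: "nat \<Rightarrow> 'a set"
  assumes "compact E"
    and "k > 1"
    and homeo: "\<forall>i\<in>{1..k}. homeomorphism E E (f i) (finv i)"
    and cpt: "\<forall>i\<in>{1..k}. compact (A i) \<and> compact (B i) \<and> A i \<subseteq> E \<and> B i \<subseteq> E"
    and disjAB: "\<forall>i\<in>{1..k}. \<forall>j\<in>{1..k}. A i \<inter> B j = {}"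
    and disjA: "\<forall>i\<in>{1..k}. \<forall>j\<in>{1..k}. i \<noteq> j \<longrightarrow> A i \<inter> A j = {}"
    and disjB: "\<forall>i\<in>{1..k}. \<forall>j\<in>{1..k}. i \<noteq> j \<longrightarrow> B i \<inter> B j = {}"
    and pingpong: "\<forall>i\<in>{1..k}. f i ` (E - A i) \<subseteq> B i"
    and contr: "\<forall>i\<in>{1..k}. contraction_on (E - A i) (f i) \<and> contraction_on (E - B i) (finv i)"
  shows "\<forall>eps>0. \<exists>l::nat. l \<ge> 1 \<and>
           (\<forall>w. length w = l \<longrightarrow> set w \<subseteq> {1..k} \<times> UNIV \<longrightarrow> reduced_word w \<longrightarrow>
              diameter (word_map f finv w ` (E - C'set A B (hd w))) < eps)"
proof (intro allI impI)
  fix eps :: real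
  assume "eps > 0"
  interpret contracting_ping_pong E k f finv A B
    using assms(1) homeo cpt disjAB disjA disjB pingpong contr by unfold_locales auto
  obtain l where "l \<ge> 1" and close: "\<forall>w. length w = l \<longrightarrow> set w \<subseteq> letters \<longrightarrow> reduced_word w \<longrightarrow>
    (\<forall>u\<in>word_map f finv w ` (E - C' (hd w)). \<forall>v\<in>word_map f finv w ` (E - C' (hd w)). dist u v < eps / 2)"
    using reduced_word_image_close[of "eps / 2"] \<open>eps > 0\<close> by auto
  have "diameter (word_map f finv w ` (E - C' (hd w))) \<le> eps / 2"
    if "length w = l" "set w \<subseteq> letters" "reduced_word w" for w
    using close that \<open>eps > 0\<close> by (intro diameter_le_dist_bound) (auto intro: less_imp_le)
  then show "\<exists>l. l \<ge> 1 \<and> (\<forall>w. length w = l \<longrightarrow> set w \<subseteq> letters \<longrightarrow> reduced_word w \<longrightarrow>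
      diameter (word_map f finv w ` (E - C' (hd w))) < eps)"
    using \<open>l \<ge> 1\<close> \<open>eps > 0\<close> by (intro exI[of _ l]) fastforce
qed

end
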